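(* Let $G$ be a finite simple graph on $2i$ vertices and let $J\in\mathcal{P}(G)$. Then for each integer $k$ with $0\le k\le i-\frac{|J|}{2}$, $$|C_k(J;G)| = |C_k(\emptyset;G^\ast_J)|.$$
   Context: All graphs are finite simple graphs; $G|_I$ is the induced subgraph on $I\subseteq V(G)$. $\mathcal{E}\mathcal{C}(G)=\{I\subseteq V(G): G|_I \text{ has no connected component of odd order}\}$. For a graph $G$ of even order, $\mathcal{P}(G)=\mathcal{E}\mathcal{C}(G)\cup\{V(G)\}$, a poset under inclusion. For $I\in\mathcal{P}(G)$ and $k\ge0$, $C_k(I;G)$ is the set of chains $I=I_0\subsetneq I_1\subsetneq\cdots\subsetneq I_k=V(G)$ with $I_j\in\mathcal{P}(G)$ for all $1\le j\le k$ (so $C_0(I;G)$ is $\{(V(G))\}$ if $I=V(G)$ and empty otherwise). The reconnected complement $G^\ast_J$ is the graph on $V(G)\setminus J$ in which $\{a,b\}$ is an edge iff there is a path from $a$ to $b$ in $G|_{J\cup\{a,b\}}$. *)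

theory Defs
  imports Main
begin

type_synonym 'a graph = "'a set \<times> 'a set set"

definition verts :: "'a graph \<Rightarrow> 'a set" where "verts G = fst G"
definition edges :: "'a graph \<Rightarrow> 'a set set" where "edges G = snd G"

definition simple_graph :: "'a graph \<Rightarrow> bool" where
  "simple_graph G \<longleftrightarrow> finite (verts G) \<and>
     (\<forall>e\<in>edges G. e \<subseteq> verts G \<and> card e = 2)"

definition induced_adj :: "'a graph \<Rightarrow> 'a set \<Rightarrow> ('a \<times> 'a) set" where
  "induced_adj G S = {(x, y). x \<in> S \<and> y \<in> S \<and> {x, y} \<in> edges G}"

definition component :: "'a graph \<Rightarrow> 'a set \<Rightarrow> 'a \<Rightarrow> 'a set" where
  "component G I x = {y \<in> I. (x, y) \<in> (induced_adj G I)\<^sup>*}"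

definition EC :: "'a graph \<Rightarrow> 'a set set" where
  "EC G = {I. I \<subseteq> verts G \<and> (\<forall>x\<in>I. even (card (component G I x)))}"

definition PP :: "'a graph \<Rightarrow> 'a set set" where
  "PP G = EC G \<union> {verts G}"

text \<open>C_k(I;G): chains I = I_0 \<subset> I_1 \<subset> ... \<subset> I_k = V(G), I_j \<in> P(G) for 1 \<le> j \<le> k,
  represented as lists of length k+1.\<close>
definition chains :: "'a graph \<Rightarrow> 'a set \<Rightarrow> nat \<Rightarrow> 'a set list set" where
  "chains G I k = {c. length c = Suc k \<and> c ! 0 = I \<and> c ! k = verts G \<and>
      (\<forall>j<k. c ! j \<subset> c ! Suc j) \<and> (\<forall>j. 1 \<le> j \<and> j \<le> k \<longrightarrow> c ! j \<in> PP G)}"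

definition reconnected_complement :: "'a graph \<Rightarrow> 'a set \<Rightarrow> 'a graph" where
  "reconnected_complement G J =
     (verts G - J,
      {{a, b} | a b. a \<in> verts G - J \<and> b \<in> verts G - J \<and> a \<noteq> b \<and>
          (a, b) \<in> (induced_adj G (J \<union> {a, b}))\<^sup>*})"

end

theory Submission
  imports Defs
begin

text \<open>For \<open>J \<subseteq> I\<close>, a path in \<open>G|\<^sub>I\<close> between vertices outside \<open>J\<close> splits at its
  vertices outside \<open>J\<close> into pieces whose interior lies in \<open>J\<close>, i.e. into edges of
  \<open>G\<^sup>*\<^sub>J\<close>; hence the components of \<open>G\<^sup>*\<^sub>J|\<^sub>I\<^sub>-\<^sub>J\<close> are the components of \<open>G|\<^sub>I\<close> with
  \<open>J\<close> removed. If \<open>J \<in> EC(G)\<close>, each component of \<open>G|\<^sub>I\<close> is a union of components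
  of \<open>G|\<^sub>J\<close> plus vertices outside \<open>J\<close>, so removing \<open>J\<close> does not change its parity.
  Therefore \<open>S \<mapsto> S - J\<close> is an order isomorphism from the interval \<open>[J, V(G)]\<close> of
  \<open>P(G)\<close> onto \<open>P(G\<^sup>*\<^sub>J)\<close>, and applying it entrywise is a bijection of chains.\<close>

lemma sym_induced_adj: "sym (induced_adj G S)"
  unfolding sym_def induced_adj_def by (auto simp: insert_commute)

lemma induced_adj_rtrancl_sym:
  "(x, y) \<in> (induced_adj G S)\<^sup>* \<Longrightarrow> (y, x) \<in> (induced_adj G S)\<^sup>*"
  using sym_rtrancl[OF sym_induced_adj] by (meson symD)

lemma induced_adj_rtrancl_mono:
  "S \<subseteq> T \<Longrightarrow> (x, y) \<in> (induced_adj G S)\<^sup>* \<Longrightarrow> (x, y) \<in> (induced_adj G T)\<^sup>*"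
  using rtrancl_mono[of "induced_adj G S" "induced_adj G T"] by (auto simp: induced_adj_def)

lemma induced_adj_rtrancl_target:
  "(x, y) \<in> (induced_adj G S)\<^sup>* \<Longrightarrow> y = x \<or> y \<in> S"
  by (induction rule: rtrancl_induct) (auto simp: induced_adj_def)

lemma component_subset: "component G I x \<subseteq> I"
  unfolding component_def by auto

lemma self_in_component: "x \<in> I \<Longrightarrow> x \<in> component G I x"
  unfolding component_def by auto

lemma component_eq:
  assumes "y \<in> component G I x"
  shows "component G I y = component G I x"
proof -
  have "(x, y) \<in> (induced_adj G I)\<^sup>*"
    using assms unfolding component_def by simp
  moreover from this have "(y, x) \<in> (induced_adj G I)\<^sup>*"
    by (rule induced_adj_rtrancl_sym)
  ultimately show ?thesis
    unfolding component_def by (blast intro: rtrancl_trans)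
qed

lemma component_mono:
  "J \<subseteq> I \<Longrightarrow> y \<in> component G I x \<Longrightarrow> component G J y \<subseteq> component G I x"
proof
  fix z
  assume "J \<subseteq> I" "y \<in> component G I x" "z \<in> component G J y"
  then have "(x, y) \<in> (induced_adj G I)\<^sup>*" "(y, z) \<in> (induced_adj G I)\<^sup>*" "z \<in> I"
    unfolding component_def by (auto intro: induced_adj_rtrancl_mono)
  then show "z \<in> component G I x"
    unfolding component_def by (auto intro: rtrancl_trans)
qed

lemma components_disjnt:
  assumes "component G I x \<noteq> component G I y"
  shows "disjnt (component G I x) (component G I y)"
  unfolding disjnt_def
proof (rule equals0I)
  fix z
  assume "z \<in> component G I x \<inter> component G I y"
  then have "component G I z = component G I x" "component G I z = component G I y"
    by (simp_all add: component_eq)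
  with assms show False
    by simp
qed

lemma even_card_union_of_components:
  assumes "J \<in> EC G" "finite J" "T \<subseteq> J"
    and closed: "\<And>y. y \<in> T \<Longrightarrow> component G J y \<subseteq> T"
  shows "even (card T)"
proof -
  let ?C = "component G J ` T"
  have T_eq: "\<Union>?C = T"
  proof
    show "\<Union>?C \<subseteq> T"
      using closed by (rule UN_least)
    show "T \<subseteq> \<Union>?C"
    proof
      fix y
      assume "y \<in> T"
      then have "y \<in> component G J y"
        using assms(3) by (auto intro: self_in_component)
      with \<open>y \<in> T\<close> show "y \<in> \<Union>?C"
        by (rule UN_I)
    qed
  qed
  have "pairwise disjnt ?C"
    by (rule pairwise_imageI) (simp add: components_disjnt)
  moreover have "finite (component G J y)" for y
    using component_subset assms(2) by (rule finite_subset)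
  ultimately have "card (\<Union>?C) = (\<Sum>A\<in>?C. card A)"
    by (intro card_Union_disjoint) auto
  moreover have "even (card (component G J y))" if "y \<in> T" for y
    using that assms(1,3) unfolding EC_def by auto
  ultimately show ?thesis
    unfolding T_eq by (auto intro: dvd_sum)
qed

lemma even_card_component_inter:
  assumes "J \<in> EC G" "J \<subseteq> I" "finite I"
  shows "even (card (component G I x \<inter> J))"
proof (rule even_card_union_of_components[OF assms(1)])
  show "finite J"
    using assms(2,3) by (rule finite_subset)
  show "component G J y \<subseteq> component G I x \<inter> J" if "y \<in> component G I x \<inter> J" for y
    using that component_mono[OF assms(2)] component_subset[of G J y] by blast
qed blast

lemma verts_reconnected_complement: "verts (reconnected_complement G J) = verts G - J"
  by (simp add: reconnected_complement_def verts_def)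

lemma edge_reconnected_complement_iff:
  "{a, b} \<in> edges (reconnected_complement G J) \<longleftrightarrow>
     a \<in> verts G - J \<and> b \<in> verts G - J \<and> a \<noteq> b \<and>
     (a, b) \<in> (induced_adj G (J \<union> {a, b}))\<^sup>*"
    (is "_ \<longleftrightarrow> ?E a b")
proof
  assume "{a, b} \<in> edges (reconnected_complement G J)"
  then obtain a' b' where ab: "{a, b} = {a', b'}" "?E a' b'"
    unfolding reconnected_complement_def edges_def by auto
  have "(b', a') \<in> (induced_adj G (J \<union> {a', b'}))\<^sup>*"
    using ab(2) by (blast intro: induced_adj_rtrancl_sym)
  then have "?E b' a'"
    using ab(2) by (auto simp: insert_commute)
  moreover have "a = a' \<and> b = b' \<or> a = b' \<and> b = a'"
    using ab(1) by (simp add: doubleton_eq_iff)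
  ultimately show "?E a b"
    using ab(2) by (elim disjE conjE) simp_all
next
  assume "?E a b"
  then have "{a, b} \<in> {{a', b'} | a' b'. ?E a' b'}"
    by blast
  then show "{a, b} \<in> edges (reconnected_complement G J)"
    by (simp only: reconnected_complement_def edges_def snd_conv)
qed

lemma induced_adj_reconnected_complement:
  "(a, b) \<in> induced_adj (reconnected_complement G J) S \<longleftrightarrow>
     a \<in> S \<and> b \<in> S \<and> a \<in> verts G - J \<and> b \<in> verts G - J \<and> a \<noteq> b \<and>
     (a, b) \<in> (induced_adj G (J \<union> {a, b}))\<^sup>*"
  unfolding induced_adj_def[of "reconnected_complement G J"] edge_reconnected_complement_iff[symmetric]
  by blast

lemma rtrancl_reconnected_complement_if_joined_through:
  assumes "I \<subseteq> verts G" "z \<in> I - J" "w \<in> I - J"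
    and "(z, w) \<in> (induced_adj G (J \<union> {z, w}))\<^sup>*"
  shows "(z, w) \<in> (induced_adj (reconnected_complement G J) (I - J))\<^sup>*"
proof (cases "z = w")
  case False
  with assms have "(z, w) \<in> induced_adj (reconnected_complement G J) (I - J)"
    by (auto simp: induced_adj_reconnected_complement)
  then show ?thesis
    by (rule r_into_rtrancl)
qed simp

lemma rtrancl_of_reconnected_complement:
  assumes "J \<subseteq> I" "(x, y) \<in> (induced_adj (reconnected_complement G J) (I - J))\<^sup>*"
  shows "(x, y) \<in> (induced_adj G I)\<^sup>*"
  using assms(2)
proof (induction rule: rtrancl_induct)
  case (step y z)
  then have "(y, z) \<in> (induced_adj G (J \<union> {y, z}))\<^sup>*" "J \<union> {y, z} \<subseteq> I"
    using assms(1) by (auto simp: induced_adj_reconnected_complement)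
  then have "(y, z) \<in> (induced_adj G I)\<^sup>*"
    by (rule induced_adj_rtrancl_mono[rotated])
  with step.IH show ?case
    by (rule rtrancl_trans)
qed simp

text \<open>The witness \<open>z\<close> is the last vertex outside \<open>J\<close> on the path from \<open>x\<close> to \<open>y\<close>.\<close>

lemma rtrancl_imp_reconnected_complement_rtrancl:
  assumes "J \<subseteq> I" "I \<subseteq> verts G" "x \<in> I - J" "(x, y) \<in> (induced_adj G I)\<^sup>*"
  shows "\<exists>z \<in> I - J. (x, z) \<in> (induced_adj (reconnected_complement G J) (I - J))\<^sup>* \<and>
           (z, y) \<in> (induced_adj G (insert z J))\<^sup>*"
  using assms(4)
proof (induction rule: rtrancl_induct)
  case base
  show ?case
    using assms(3) by (intro bexI[of _ x]) auto
next
  case (step y w)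
  then obtain z where z: "z \<in> I - J"
    "(x, z) \<in> (induced_adj (reconnected_complement G J) (I - J))\<^sup>*"
    "(z, y) \<in> (induced_adj G (insert z J))\<^sup>*"
    by blast
  have "y \<in> insert z J"
    using induced_adj_rtrancl_target[OF z(3)] by blast
  with step.hyps(2) have yw: "(y, w) \<in> induced_adj G (insert w (insert z J))" "w \<in> I"
    by (auto simp: induced_adj_def)
  show ?case
  proof (cases "w \<in> J")
    case True
    with yw(1) have "(y, w) \<in> induced_adj G (insert z J)"
      by (simp add: insert_absorb)
    with z show ?thesis
      by (meson rtrancl.rtrancl_into_rtrancl)
  next
    case False
    have "(z, y) \<in> (induced_adj G (J \<union> {z, w}))\<^sup>*"
      using z(3) by (rule induced_adj_rtrancl_mono[rotated]) auto
    moreover have "(y, w) \<in> induced_adj G (J \<union> {z, w})"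
      using yw(1) by (simp add: insert_commute)
    ultimately have "(z, w) \<in> (induced_adj G (J \<union> {z, w}))\<^sup>*"
      by (rule rtrancl.rtrancl_into_rtrancl)
    then have "(z, w) \<in> (induced_adj (reconnected_complement G J) (I - J))\<^sup>*"
      using False yw(2) by (intro rtrancl_reconnected_complement_if_joined_through[OF assms(2) z(1)]) simp_all
    with z(2) have "(x, w) \<in> (induced_adj (reconnected_complement G J) (I - J))\<^sup>*"
      by (rule rtrancl_trans)
    with False yw(2) show ?thesis
      by (intro bexI[of _ w]) auto
  qed
qed

lemma component_reconnected_complement:
  assumes "J \<subseteq> I" "I \<subseteq> verts G" "x \<in> I - J"
  shows "component (reconnected_complement G J) (I - J) x = component G I x - J"
proof
  show "component (reconnected_complement G J) (I - J) x \<subseteq> component G I x - J"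
    using rtrancl_of_reconnected_complement[OF assms(1)] unfolding component_def by blast
  show "component G I x - J \<subseteq> component (reconnected_complement G J) (I - J) x"
  proof
    fix y
    assume "y \<in> component G I x - J"
    then have y: "(x, y) \<in> (induced_adj G I)\<^sup>*" "y \<in> I - J"
      unfolding component_def by auto
    then obtain z where z: "z \<in> I - J"
      "(x, z) \<in> (induced_adj (reconnected_complement G J) (I - J))\<^sup>*"
      "(z, y) \<in> (induced_adj G (insert z J))\<^sup>*"
      using rtrancl_imp_reconnected_complement_rtrancl[OF assms] by blast
    have "(z, y) \<in> (induced_adj G (J \<union> {z, y}))\<^sup>*"
      using z(3) by (rule induced_adj_rtrancl_mono[rotated]) auto
    then have "(z, y) \<in> (induced_adj (reconnected_complement G J) (I - J))\<^sup>*"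
      by (rule rtrancl_reconnected_complement_if_joined_through[OF assms(2) z(1) y(2)])
    with z(2) y(2) show "y \<in> component (reconnected_complement G J) (I - J) x"
      unfolding component_def by (blast intro: rtrancl_trans)
  qed
qed

lemma EC_reconnected_complement_iff:
  assumes "J \<in> EC G" "J \<subseteq> I" "I \<subseteq> verts G" "finite (verts G)"
  shows "I \<in> EC G \<longleftrightarrow> I - J \<in> EC (reconnected_complement G J)"
proof -
  have "finite I"
    using assms(3,4) by (rule finite_subset)
  have parity: "even (card (component G I x)) \<longleftrightarrow> even (card (component G I x - J))" for x
  proof -
    have "finite (component G I x)"
      using component_subset \<open>finite I\<close> by (rule finite_subset)
    then have "card (component G I x) = card (component G I x \<inter> J) + card (component G I x - J)"
      by (rule card_Int_Diff)
    then show ?thesis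
      using even_card_component_inter[OF assms(1,2) \<open>finite I\<close>, of x] by simp
  qed
  have parity_reconnected: "even (card (component G I y)) \<longleftrightarrow>
      even (card (component (reconnected_complement G J) (I - J) y))" if "y \<in> I - J" for y
    using parity[of y] component_reconnected_complement[OF assms(2,3) that] by simp
  have even_inside_J: "even (card (component G I x))" if "component G I x \<subseteq> J" for x
    using even_card_component_inter[OF assms(1,2) \<open>finite I\<close>, of x] that
    by (simp add: Int_absorb2)
  show ?thesis
  proof
    assume I: "I \<in> EC G"
    show "I - J \<in> EC (reconnected_complement G J)"
      unfolding EC_def
    proof (intro CollectI conjI ballI)
      show "I - J \<subseteq> verts (reconnected_complement G J)"
        using assms(3) by (auto simp: verts_reconnected_complement)
      fix y
      assume "y \<in> I - J"
      with I show "even (card (component (reconnected_complement G J) (I - J) y))"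
        using parity_reconnected unfolding EC_def by blast
    qed
  next
    assume I_J: "I - J \<in> EC (reconnected_complement G J)"
    show "I \<in> EC G"
      unfolding EC_def
    proof (intro CollectI conjI ballI)
      show "I \<subseteq> verts G"
        by (rule assms(3))
      fix x
      assume "x \<in> I"
      show "even (card (component G I x))"
      proof (cases "component G I x \<subseteq> J")
        case False
        then obtain y where y: "y \<in> component G I x" "y \<notin> J"
          by blast
        then have "y \<in> I - J"
          using component_subset[of G I x] by blast
        moreover have "component G I y = component G I x"
          using y(1) by (rule component_eq)
        ultimately show ?thesis
          using I_J parity_reconnected unfolding EC_def by fastforce
      qed (rule even_inside_J)
    qed
  qed
qed

lemma PP_reconnected_complement_iff:
  assumes "J \<in> PP G" "J \<subseteq> I" "I \<subseteq> verts G" "finite (verts G)"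
  shows "I \<in> PP G \<longleftrightarrow> I - J \<in> PP (reconnected_complement G J)"
proof (cases "I = verts G")
  case True
  then show ?thesis
    by (simp add: PP_def verts_reconnected_complement)
next
  case False
  then have "J \<in> EC G" "I - J \<noteq> verts G - J"
    using assms(1-3) unfolding PP_def by auto
  with False show ?thesis
    using EC_reconnected_complement_iff[OF _ assms(2-4)]
    by (simp add: PP_def verts_reconnected_complement)
qed

lemma sorted_wrt_chain:
  assumes "c \<in> chains G I k"
  shows "sorted_wrt (\<subset>) c"
proof -
  have "transp ((\<subset>) :: 'a set \<Rightarrow> _)"
    by (auto intro: transpI)
  with assms show ?thesis
    unfolding chains_def by (simp add: sorted_wrt_iff_nth_Suc_transp)
qed

lemma set_chain_subset: "c \<in> chains G I k \<Longrightarrow> set c \<subseteq> {S. I \<subseteq> S \<and> S \<subseteq> verts G}"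
proof
  fix S
  assume c: "c \<in> chains G I k" and "S \<in> set c"
  then have len: "length c = Suc k" and ends: "c ! 0 = I" "c ! k = verts G"
    unfolding chains_def by simp_all
  then obtain j where j: "j \<le> k" "S = c ! j"
    using \<open>S \<in> set c\<close> by (auto simp: in_set_conv_nth less_Suc_eq_le)
  have sorted: "sorted_wrt (\<subset>) c"
    using c by (rule sorted_wrt_chain)
  have "c ! 0 \<subseteq> c ! j"
    using sorted_wrt_nth_less[OF sorted, of 0 j] len j(1) by (cases "j = 0") auto
  moreover have "c ! j \<subseteq> c ! k"
    using sorted_wrt_nth_less[OF sorted, of j k] len j(1) by (cases "j = k") auto
  ultimately show "S \<in> {S. I \<subseteq> S \<and> S \<subseteq> verts G}"
    using ends j(2) by simp
qed

lemma map_chain_mem_chains: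
  assumes c: "c \<in> chains G I k"
    and strict: "\<And>S T. I \<subseteq> S \<Longrightarrow> S \<subset> T \<Longrightarrow> T \<subseteq> verts G \<Longrightarrow> f S \<subset> f T"
    and PP: "\<And>S. I \<subseteq> S \<Longrightarrow> S \<subseteq> verts G \<Longrightarrow> S \<in> PP G \<Longrightarrow> f S \<in> PP G'"
    and "f I = I'" "f (verts G) = verts G'"
  shows "map f c \<in> chains G' I' k"
proof -
  have len: "length c = Suc k"
    using c unfolding chains_def by simp
  have bounds: "I \<subseteq> c ! j \<and> c ! j \<subseteq> verts G" if "j \<le> k" for j
  proof -
    have "c ! j \<in> set c"
      using len that by simp
    then show ?thesis
      using set_chain_subset[OF c] by blast
  qed
  have "f (c ! j) \<subset> f (c ! Suc j)" if "j < k" for j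
    using c that bounds[of j] bounds[of "Suc j"] strict unfolding chains_def by auto
  moreover have "f (c ! j) \<in> PP G'" if "1 \<le> j" "j \<le> k" for j
    using c that bounds[of j] PP unfolding chains_def by auto
  ultimately show ?thesis
    using c assms(4,5) unfolding chains_def by auto
qed

lemma bij_betw_chains_reconnected_complement:
  assumes "J \<in> PP G" "finite (verts G)"
  shows "bij_betw (map (\<lambda>S. S - J)) (chains G J k) (chains (reconnected_complement G J) {} k)"
proof (rule bij_betw_byWitness[where f' = "map (\<lambda>S. S \<union> J)"])
  have "J \<subseteq> verts G"
    using assms(1) unfolding PP_def EC_def by auto
  show "\<forall>c \<in> chains G J k. map (\<lambda>S. S \<union> J) (map (\<lambda>S. S - J) c) = c"
  proof
    fix c
    assume "c \<in> chains G J k"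
    then have "S - J \<union> J = S" if "S \<in> set c" for S
      using that set_chain_subset by blast
    then show "map (\<lambda>S. S \<union> J) (map (\<lambda>S. S - J) c) = c"
      by (simp add: map_idI)
  qed
  show "\<forall>c \<in> chains (reconnected_complement G J) {} k. map (\<lambda>S. S - J) (map (\<lambda>S. S \<union> J) c) = c"
  proof
    fix c
    assume "c \<in> chains (reconnected_complement G J) {} k"
    then have "S \<union> J - J = S" if "S \<in> set c" for S
      using that set_chain_subset by (fastforce simp: verts_reconnected_complement)
    then show "map (\<lambda>S. S - J) (map (\<lambda>S. S \<union> J) c) = c"
      by (simp add: map_idI)
  qed
  show "map (\<lambda>S. S - J) ` chains G J k \<subseteq> chains (reconnected_complement G J) {} k"
  proof (clarify, rule map_chain_mem_chains)
    show "S - J \<in> PP (reconnected_complement G J)"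
      if "J \<subseteq> S" "S \<subseteq> verts G" "S \<in> PP G" for S
      using that PP_reconnected_complement_iff[OF assms(1) _ _ assms(2)] by blast
  qed (auto simp: verts_reconnected_complement)
  show "map (\<lambda>S. S \<union> J) ` chains (reconnected_complement G J) {} k \<subseteq> chains G J k"
  proof (clarify, rule map_chain_mem_chains)
    show "S \<union> J \<in> PP G"
      if "S \<subseteq> verts (reconnected_complement G J)" "S \<in> PP (reconnected_complement G J)" for S
    proof -
      have "S \<union> J - J = S" "S \<union> J \<subseteq> verts G"
        using that(1) \<open>J \<subseteq> verts G\<close> by (auto simp: verts_reconnected_complement)
      then show ?thesis
        using PP_reconnected_complement_iff[OF assms(1) Un_upper2 _ assms(2)] that(2) by simp
    qed
  qed (use \<open>J \<subseteq> verts G\<close> in \<open>auto simp: verts_reconnected_complement\<close>)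
qed

theorem mainTheorem5:
  fixes G :: "'a graph" and J :: "'a set" and i k :: nat
  assumes "simple_graph G"
    and "card (verts G) = 2 * i"
    and "J \<in> PP G"
    and "2 * k + card J \<le> 2 * i"
  shows "card (chains G J k) = card (chains (reconnected_complement G J) {} k)"
proof -
  have "finite (verts G)"
    using assms(1) unfolding simple_graph_def by simp
  with assms(3) show ?thesis
    by (rule bij_betw_same_card[OF bij_betw_chains_reconnected_complement])
qed

end
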